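(* If $(c_1,c_2,z,\Omega)$ is $P$-stable, then $\Theta^{c_1,c_2}_r(z;\Omega)$ is independent of $r$ (for $\operatorname{Re}(r)>-1$).
   Context: Let $P$ be a $g\times g$ integer matrix with $\det P=\pm1$. Let $z\in\mathbb{C}^g$, let $\Omega$ be a complex symmetric $g\times g$ matrix with $M=\operatorname{Im}(\Omega)$ of signature $(g-1,1)$, and let $c_1,c_2\in\mathbb{R}^g$ with $c_j^\top Mc_j<0$. The quadruple $(c_1,c_2,z,\Omega)$ is called $P$-stable if $P^\top\Omega P=\Omega$, $Pc_1=c_2$, and $P^\top z\equiv z \pmod{\mathbb{Z}^g}$. For a continuous test function $f$ of one real variable, set $\mathcal{E}_f(\alpha)=\int_0^\alpha f(u)e^{-\pi u^2}\,du$ and $\Theta^{c_1,c_2}[f](z;\Omega)=\sum_{n\in\mathbb{Z}^g}\Big[\mathcal{E}_f\Big(\frac{c^\top \operatorname{Im}(\Omega n+z)}{\sqrt{-\frac12 c^\top Mc}}\Big)\Big]_{c=c_1}^{c_2} e\big(\tfrac12 n^\top\Omega n+n^\top z\big)$, where $e(x)=\exp(2\pi i x)$, $[h(c)]_{c=c_1}^{c_2}=h(c_2)-h(c_1)$, and the square root is the positive one. For $\operatorname{Re}(r)>-1$, define $\Theta^{c_1,c_2}_r(z;\Omega)=\frac{\pi^{(r+1)/2}}{\Gamma\left(\frac{r+1}{2}\right)}\Theta^{c_1,c_2}[f](z;\Omega)$ with $f(u)=|u|^r$. *)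

theory Defs
  imports "HOL-Analysis.Analysis"
begin

text \<open>Conventions: vectors in C^g, R^g, Z^g are modelled as real^'g etc. for a finite index type 'g
  (g = CARD('g)); matrices as (_^'g^'g).\<close>

definition e :: "complex \<Rightarrow> complex" where
  "e x = exp (2 * of_real pi * \<i> * x)"

definition ImMat :: "complex^'g^'g \<Rightarrow> real^'g^'g" where
  "ImMat \<Omega> = (\<chi> i j. Im (\<Omega> $ i $ j))"

definition has_signature :: "real^'g^'g \<Rightarrow> nat \<Rightarrow> nat \<Rightarrow> bool" where
  "has_signature M p q \<longleftrightarrow> transpose M = M \<and>
     (\<exists>Q d. orthogonal_matrix Q \<and> transpose Q ** M ** Q = (\<chi> i j. if i = j then d $ i else 0)
            \<and> card {i. d $ i > 0} = p \<and> card {i. d $ i < 0} = q)"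

definition qform :: "real^'g^'g \<Rightarrow> real^'g \<Rightarrow> real" where
  "qform M c = (\<Sum>i\<in>UNIV. \<Sum>j\<in>UNIV. c $ i * M $ i $ j * c $ j)"

definition int_to_cmat :: "int^'g^'g \<Rightarrow> complex^'g^'g" where
  "int_to_cmat P = (\<chi> i j. of_int (P $ i $ j))"

definition int_to_rmat :: "int^'g^'g \<Rightarrow> real^'g^'g" where
  "int_to_rmat P = (\<chi> i j. of_int (P $ i $ j))"

definition P_stable :: "int^'g^'g \<Rightarrow> real^'g \<Rightarrow> real^'g \<Rightarrow> complex^'g \<Rightarrow> complex^'g^'g \<Rightarrow> bool" where
  "P_stable P c1 c2 z \<Omega> \<longleftrightarrow>
     transpose (int_to_cmat P) ** \<Omega> ** int_to_cmat P = \<Omega> \<and>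
     int_to_rmat P *v c1 = c2 \<and>
     (\<forall>i. (transpose (int_to_cmat P) *v z - z) $ i \<in> \<int>)"

definition Ecal :: "(real \<Rightarrow> complex) \<Rightarrow> real \<Rightarrow> complex" where
  "Ecal f \<alpha> = interval_lebesgue_integral lborel (ereal 0) (ereal \<alpha>)
                 (\<lambda>u. f u * of_real (exp (- pi * u^2)))"

definition Theta_f :: "(real \<Rightarrow> complex) \<Rightarrow> real^'g \<Rightarrow> real^'g \<Rightarrow> complex^'g \<Rightarrow> complex^'g^'g \<Rightarrow> complex" where
  "Theta_f f c1 c2 z \<Omega> =
     infsum (\<lambda>n::int^'g.
       (let w = \<Omega> *v (\<chi> i. of_int (n $ i)) + z;
            E = (\<lambda>c. Ecal f ((\<Sum>i\<in>UNIV. c $ i * Im (w $ i)) / sqrt (- (1/2) * qform (ImMat \<Omega>) c)))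
        in (E c2 - E c1) *
           e ((1/2) * (\<Sum>i\<in>UNIV. \<Sum>j\<in>UNIV. of_int (n $ i) * \<Omega> $ i $ j * of_int (n $ j))
              + (\<Sum>i\<in>UNIV. of_int (n $ i) * z $ i)))) UNIV"

definition Theta_r :: "complex \<Rightarrow> real^'g \<Rightarrow> real^'g \<Rightarrow> complex^'g \<Rightarrow> complex^'g^'g \<Rightarrow> complex" where
  "Theta_r r c1 c2 z \<Omega> =
     of_real pi powr ((r + 1) / 2) / Gamma ((r + 1) / 2) *
     Theta_f (\<lambda>u. of_real \<bar>u\<bar> powr r) c1 c2 z \<Omega>"

end

theory Submission
  imports Defs
begin

text \<open>Only the combination \<open>Ecal_r r\<close> of the weight \<open>|u|\<^sup>r\<close> with the normalising constant of
  \<open>Theta_r\<close> enters, and by the Gaussian moment integral \<open>Ecal_r r \<alpha>\<close> tends to \<open>\<plusminus>1/2\<close> as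
  \<open>\<alpha> \<rightarrow> \<plusminus>\<infinity>\<close> with error \<open>O(exp (- 3 pi \<alpha>\<^sup>2 / 4))\<close>, whatever \<open>r\<close> is. Hence the difference of
  the two theta series is \<open>S c\<^sub>2 - S c\<^sub>1\<close>, where \<open>S c\<close> sums \<open>(Ecal_r r - Ecal_r s)\<close> at the
  argument belonging to \<open>c\<close> against \<open>e (\<dots>)\<close>. These series converge absolutely: the Gaussian
  decay in the direction of \<open>c\<close> compensates the single negative direction of \<open>Im \<Omega>\<close>, which
  has signature \<open>(g - 1, 1)\<close>. Finally \<open>n \<mapsto> P n\<close> is a bijection of \<open>\<int>\<^sup>g\<close> which, by
  \<open>P\<close>-stability, carries the terms of \<open>S c\<^sub>1\<close> onto those of \<open>S c\<^sub>2\<close>, so \<open>S c\<^sub>1 = S c\<^sub>2\<close>.\<close>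

section \<open>Gaussian moments and the normalised error function\<close>

lemma of_real_powr_eq_exp_ln:
  "x > 0 \<Longrightarrow> complex_of_real x powr z = exp (z * of_real (ln x))"
  by (simp add: powr_def Ln_of_real)

lemma Gamma_integrand_substitution:
  fixes r :: complex
  assumes c: "c > 0" and u: "u > 0"
  shows "\<bar>2 * c * u\<bar> *\<^sub>R (complex_of_real (c * u\<^sup>2) powr ((r + 1) / 2 - 1) / of_real (exp (c * u\<^sup>2)))
    = 2 * of_real c powr ((r + 1) / 2) * (of_real u powr r * of_real (exp (- c * u\<^sup>2)))"
proof -
  define w where "w = (r + 1) / 2"
  have cu: "c * u\<^sup>2 > 0" using u c by simp
  have "complex_of_real (c * u\<^sup>2) powr (w - 1) / of_real (exp (c * u\<^sup>2))
      = exp ((w - 1) * of_real (ln c + 2 * ln u)) * of_real (exp (- c * u\<^sup>2))"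
    unfolding of_real_powr_eq_exp_ln[OF cu]
    using u c by (simp add: ln_mult ln_realpow exp_minus divide_inverse)
  moreover have "complex_of_real (2 * c * u) = 2 * exp (of_real (ln c + ln u))"
    using u c by (simp only: exp_of_real) (simp add: exp_add)
  moreover have "of_real (ln c + ln u) + (w - 1) * of_real (ln c + 2 * ln u)
      = w * of_real (ln c) + r * complex_of_real (ln u)"
    by (simp add: w_def algebra_simps add_divide_distrib)
  ultimately show ?thesis
    using u c by (simp add: w_def [symmetric] of_real_powr_eq_exp_ln scaleR_conv_of_real mult_exp_exp
        exp_add [symmetric] mult.assoc)
qed

lemma gaussian_moment_integral:
  fixes r :: complex and c :: real
  assumes r: "Re r > -1" and c: "c > 0"
  shows "(\<lambda>u. of_real u powr r * of_real (exp (- c * u\<^sup>2))) absolutely_integrable_on {0<..}"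
    and "integral {0<..} (\<lambda>u. of_real u powr r * of_real (exp (- c * u\<^sup>2)))
           = Gamma ((r + 1) / 2) / (2 * of_real c powr ((r + 1) / 2))"
proof -
  define w where "w = (r + 1) / 2"
  have w: "Re w > 0" using r by (simp add: w_def)
  define F where "F t = complex_of_real t powr (w - 1) / of_real (exp t)" for t
  define k where "k = 2 * complex_of_real c powr w"
  have k: "k \<noteq> 0" using c by (simp add: k_def)
  have image: "(\<lambda>u. c * u\<^sup>2) ` {0<..} = ({0<..} :: real set)"
  proof safe
    fix t :: real assume "t > 0"
    then show "t \<in> (\<lambda>u. c * u\<^sup>2) ` {0<..}"
      using c by (intro image_eqI[of _ _ "sqrt (t / c)"]) (auto simp: real_sqrt_pow2)
  qed (use c in auto)
  have inj: "inj_on (\<lambda>u. c * u\<^sup>2) ({0<..} :: real set)"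
    using c by (auto simp: inj_on_def power2_eq_iff_nonneg)
  have substituted: "\<bar>2 * c * u\<bar> *\<^sub>R F (c * u\<^sup>2) = k * (of_real u powr r * of_real (exp (- c * u\<^sup>2)))"
    if "u > 0" for u
    using Gamma_integrand_substitution[OF c that] by (simp add: F_def k_def w_def)
  have der: "((\<lambda>u. c * u\<^sup>2) has_field_derivative 2 * c * u) (at u within {0<..})" for u
    by (auto intro!: derivative_eq_intros)
  have "(\<lambda>u. \<bar>2 * c * u\<bar> *\<^sub>R F (c * u\<^sup>2)) absolutely_integrable_on {0<..}
        \<and> integral {0<..} (\<lambda>u. \<bar>2 * c * u\<bar> *\<^sub>R F (c * u\<^sup>2)) = Gamma w
    \<longleftrightarrow> F absolutely_integrable_on {0<..} \<and> integral {0<..} F = Gamma w"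
    using has_absolute_integral_change_of_variables_real[OF _ der inj] by (simp add: image)
  then have "(\<lambda>u. \<bar>2 * c * u\<bar> *\<^sub>R F (c * u\<^sup>2)) absolutely_integrable_on {0<..}
        \<and> integral {0<..} (\<lambda>u. \<bar>2 * c * u\<bar> *\<^sub>R F (c * u\<^sup>2)) = Gamma w"
    using absolutely_integrable_Gamma_integral'[OF w] integral_unique[OF Gamma_integral_complex'[OF w]]
    unfolding F_def[abs_def] by blast
  then have "(\<lambda>u. k * (of_real u powr r * of_real (exp (- c * u\<^sup>2)))) absolutely_integrable_on {0<..}
        \<and> integral {0<..} (\<lambda>u. k * (of_real u powr r * of_real (exp (- c * u\<^sup>2)))) = Gamma w"
    by (metis (no_types, lifting) greaterThan_iff integral_cong set_integrable_cong substituted)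
  then show "(\<lambda>u. of_real u powr r * of_real (exp (- c * u\<^sup>2))) absolutely_integrable_on {0<..}"
    and "integral {0<..} (\<lambda>u. of_real u powr r * of_real (exp (- c * u\<^sup>2))) = Gamma w / k"
    using k by (simp_all add: set_integrable_mult_right_iff field_simps)
qed

lemma Ecal_reflect:
  assumes "\<And>u. f (- u) = f u"
  shows "Ecal f (- \<alpha>) = - Ecal f \<alpha>"
proof -
  have "Ecal f \<alpha> = (LBINT x=-ereal \<alpha>..-ereal 0. f (- x) * of_real (exp (- pi * (- x)\<^sup>2)))"
    unfolding Ecal_def by (rule interval_integral_reflect)
  also have "\<dots> = (LBINT x=ereal (- \<alpha>)..ereal 0. f x * of_real (exp (- pi * x\<^sup>2)))"
    using assms by (simp add: zero_ereal_def)
  also have "\<dots> = - Ecal f (- \<alpha>)"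
    unfolding Ecal_def by (rule interval_integral_endpoints_reverse)
  finally show ?thesis by simp
qed

lemma Ecal_abs_powr:
  assumes r: "Re r > -1" and \<alpha>: "\<alpha> \<ge> 0"
  shows "Ecal (\<lambda>u. of_real \<bar>u\<bar> powr r) \<alpha>
           = integral {0<..<\<alpha>} (\<lambda>u. of_real u powr r * of_real (exp (- pi * u\<^sup>2)))"
proof -
  let ?F = "\<lambda>u::real. complex_of_real \<bar>u\<bar> powr r * of_real (exp (- pi * u\<^sup>2))"
  have F_eq: "?F = (\<lambda>u. if u = 0 then 0 else exp (r * of_real (ln \<bar>u\<bar>)) * of_real (exp (- pi * u\<^sup>2)))"
    by (auto simp: fun_eq_iff of_real_powr_eq_exp_ln)
  have "?F \<in> borel_measurable borel"
    unfolding F_eq by measurable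
  moreover have "(\<lambda>u. of_real u powr r * of_real (exp (- pi * u\<^sup>2))) absolutely_integrable_on {0<..<\<alpha>}"
    by (rule set_integrable_subset[OF gaussian_moment_integral(1)[OF r pi_gt_zero]]) auto
  moreover have "?F absolutely_integrable_on {0<..<\<alpha>}
      \<longleftrightarrow> (\<lambda>u. of_real u powr r * of_real (exp (- pi * u\<^sup>2))) absolutely_integrable_on {0<..<\<alpha>}"
    by (rule set_integrable_cong) auto
  ultimately have "set_integrable lborel {0<..<\<alpha>} ?F"
    unfolding set_integrable_def by (subst (asm) integrable_completion) (simp_all, measurable)
  then have "(LINT x:{0<..<\<alpha>}|lborel. ?F x) = integral {0<..<\<alpha>} ?F"
    by (rule set_borel_integral_eq_integral(2))
  also have "\<dots> = integral {0<..<\<alpha>} (\<lambda>u. of_real u powr r * of_real (exp (- pi * u\<^sup>2)))"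
    by (rule integral_cong) auto
  finally show ?thesis
    unfolding Ecal_def interval_lebesgue_integral_def using \<alpha> by simp
qed

lemma gaussian_moment_norm_integrable:
  assumes r: "Re r > -1" and c: "c > 0"
  shows "(\<lambda>u. u powr Re r * exp (- c * u\<^sup>2)) absolutely_integrable_on {0<..}"
proof -
  have "(\<lambda>u. norm (complex_of_real u powr r * of_real (exp (- c * u\<^sup>2)))) absolutely_integrable_on {0<..}"
    by (rule set_integrable_norm[OF gaussian_moment_integral(1)[OF r c]])
  moreover have "(\<lambda>u. u powr Re r * exp (- c * u\<^sup>2)) absolutely_integrable_on {0<..} \<longleftrightarrow>
      (\<lambda>u. norm (complex_of_real u powr r * of_real (exp (- c * u\<^sup>2)))) absolutely_integrable_on {0<..}"
    by (rule set_integrable_cong) (auto simp: norm_mult norm_powr_real_powr)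
  ultimately show ?thesis by simp
qed

text \<open>On \<open>[\<alpha>, \<infinity>)\<close> we have \<open>exp (- pi u\<^sup>2) \<le> exp (- 3 pi \<alpha>\<^sup>2 / 4) exp (- pi u\<^sup>2 / 4)\<close>.\<close>
lemma gaussian_moment_tail:
  assumes r: "Re r > -1" and \<alpha>: "\<alpha> \<ge> 0"
  defines "G \<equiv> \<lambda>u. complex_of_real u powr r * of_real (exp (- pi * u\<^sup>2))"
    and "H \<equiv> \<lambda>u. u powr Re r * exp (- (pi / 4) * u\<^sup>2)"
  shows "norm (integral {0<..<\<alpha>} G - integral {0<..} G) \<le> exp (- (3/4) * pi * \<alpha>\<^sup>2) * integral {0<..} H"
proof -
  define T where "T = {0<..} \<inter> {\<alpha>..}"
  have T: "T \<subseteq> {0<..}" "T \<in> sets lebesgue" by (auto simp: T_def)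
  have G: "G absolutely_integrable_on {0<..}"
    unfolding G_def by (rule gaussian_moment_integral(1)[OF r pi_gt_zero])
  have H: "H absolutely_integrable_on {0<..}"
    unfolding H_def using gaussian_moment_norm_integrable[OF r, of "pi / 4"] by simp
  have G_T: "G integrable_on T" and H_T: "H integrable_on T"
    using set_integrable_subset[OF G T(2,1)] set_integrable_subset[OF H T(2,1)]
    by (simp_all add: set_lebesgue_integral_eq_integral(1))
  have "{0<..<\<alpha>} \<union> T = {0<..}" "{0<..<\<alpha>} \<inter> T = {}" using \<alpha> by (auto simp: T_def)
  moreover have "G integrable_on {0<..<\<alpha>}"
    by (intro set_lebesgue_integral_eq_integral(1) set_integrable_subset[OF G]) auto
  ultimately have "integral {0<..} G = integral {0<..<\<alpha>} G + integral T G"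
    using integral_Un[OF _ G_T, of "{0<..<\<alpha>}"] by simp
  then have "norm (integral {0<..<\<alpha>} G - integral {0<..} G) = norm (integral T G)"
    by (simp add: norm_minus_commute)
  also have "\<dots> \<le> integral T (\<lambda>u. exp (- (3/4) * pi * \<alpha>\<^sup>2) * H u)"
  proof (rule integral_norm_bound_integral[OF G_T])
    show "(\<lambda>u. exp (- (3/4) * pi * \<alpha>\<^sup>2) * H u) integrable_on T"
      using integrable_on_cmult_left[OF H_T] by simp
    fix u assume "u \<in> T"
    then have u: "u > 0" "u \<ge> \<alpha>" by (auto simp: T_def)
    have "pi * \<alpha>\<^sup>2 \<le> pi * u\<^sup>2" using \<alpha> u by (simp add: power_mono)
    then have "- pi * u\<^sup>2 \<le> - (3/4) * pi * \<alpha>\<^sup>2 + - (pi / 4) * u\<^sup>2" by linarith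
    then have "exp (- pi * u\<^sup>2) \<le> exp (- (3/4) * pi * \<alpha>\<^sup>2) * exp (- (pi / 4) * u\<^sup>2)"
      by (simp flip: exp_add)
    then show "norm (G u) \<le> exp (- (3/4) * pi * \<alpha>\<^sup>2) * H u"
      using u by (simp add: G_def H_def norm_mult norm_powr_real_powr mult_left_mono mult.left_commute)
  qed
  also have "\<dots> = exp (- (3/4) * pi * \<alpha>\<^sup>2) * integral T H"
    by simp
  also have "\<dots> \<le> exp (- (3/4) * pi * \<alpha>\<^sup>2) * integral {0<..} H"
    using integral_subset_le[OF T(1) H_T set_lebesgue_integral_eq_integral(1)[OF H]]
    by (simp add: H_def)
  finally show ?thesis .
qed

lemma Ecal_abs_powr_tail:
  assumes r: "Re r > -1"
  obtains C where "\<And>\<alpha>. \<alpha> \<ge> 0 \<Longrightarrow> norm (Ecal (\<lambda>u. of_real \<bar>u\<bar> powr r) \<alpha>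
      - Gamma ((r + 1) / 2) / (2 * of_real pi powr ((r + 1) / 2))) \<le> C * exp (- (3/4) * pi * \<alpha>\<^sup>2)"
proof (rule that)
  fix \<alpha> :: real assume \<alpha>: "\<alpha> \<ge> 0"
  show "norm (Ecal (\<lambda>u. of_real \<bar>u\<bar> powr r) \<alpha> - Gamma ((r + 1) / 2) / (2 * of_real pi powr ((r + 1) / 2)))
      \<le> integral {0<..} (\<lambda>u. u powr Re r * exp (- (pi / 4) * u\<^sup>2)) * exp (- (3/4) * pi * \<alpha>\<^sup>2)"
    using gaussian_moment_tail[OF r \<alpha>] gaussian_moment_integral(2)[OF r pi_gt_zero]
    by (simp add: Ecal_abs_powr[OF r \<alpha>] mult.commute)
qed

definition Ecal_r :: "complex \<Rightarrow> real \<Rightarrow> complex" where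
  "Ecal_r r \<alpha> = of_real pi powr ((r + 1) / 2) / Gamma ((r + 1) / 2) * Ecal (\<lambda>u. of_real \<bar>u\<bar> powr r) \<alpha>"

lemma Ecal_r_minus: "Ecal_r r (- \<alpha>) = - Ecal_r r \<alpha>"
  unfolding Ecal_r_def by (subst Ecal_reflect) auto

text \<open>The normalising constant of \<open>Theta_r\<close> is \<open>1 / (2 \<integral>\<^sub>0\<^sup>\<infinity> u\<^sup>r exp (- pi u\<^sup>2) du)\<close>.\<close>
lemma Ecal_r_tail:
  assumes r: "Re r > -1"
  obtains C where "\<And>\<alpha>. \<alpha> \<ge> 0 \<Longrightarrow> norm (Ecal_r r \<alpha> - 1/2) \<le> C * exp (- (3/4) * pi * \<alpha>\<^sup>2)"
proof -
  define w where "w = (r + 1) / 2"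
  define K where "K = of_real pi powr w / Gamma w"
  have "Re w > 0" using r by (simp add: w_def)
  then have "Gamma w \<noteq> 0"
    by (intro Gamma_nonzero) (auto elim!: nonpos_Ints_cases)
  then have K_Gamma: "K * (Gamma w / (2 * of_real pi powr w)) = 1/2"
    by (simp add: K_def field_simps)
  obtain C where C: "\<And>\<alpha>. \<alpha> \<ge> 0 \<Longrightarrow> norm (Ecal (\<lambda>u. of_real \<bar>u\<bar> powr r) \<alpha>
      - Gamma w / (2 * of_real pi powr w)) \<le> C * exp (- (3/4) * pi * \<alpha>\<^sup>2)"
    using Ecal_abs_powr_tail[OF r] unfolding w_def by blast
  show ?thesis
  proof (rule that)
    fix \<alpha> :: real assume "\<alpha> \<ge> 0"
    have "Ecal_r r \<alpha> - 1/2 = K * (Ecal (\<lambda>u. of_real \<bar>u\<bar> powr r) \<alpha> - Gamma w / (2 * of_real pi powr w))"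
      using K_Gamma by (simp add: Ecal_r_def K_def w_def right_diff_distrib)
    then show "norm (Ecal_r r \<alpha> - 1/2) \<le> (norm K * C) * exp (- (3/4) * pi * \<alpha>\<^sup>2)"
      using C[OF \<open>\<alpha> \<ge> 0\<close>] by (simp add: norm_mult mult_left_mono mult.assoc)
  qed
qed

lemma Ecal_r_diff_bound:
  assumes r: "Re r > -1" and s: "Re s > -1"
  obtains C where "\<And>\<alpha>. norm (Ecal_r r \<alpha> - Ecal_r s \<alpha>) \<le> C * exp (- (3/4) * pi * \<alpha>\<^sup>2)"
proof -
  obtain C1 where C1: "\<And>\<alpha>. \<alpha> \<ge> 0 \<Longrightarrow> norm (Ecal_r r \<alpha> - 1/2) \<le> C1 * exp (- (3/4) * pi * \<alpha>\<^sup>2)"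
    using Ecal_r_tail[OF r] by blast
  obtain C2 where C2: "\<And>\<alpha>. \<alpha> \<ge> 0 \<Longrightarrow> norm (Ecal_r s \<alpha> - 1/2) \<le> C2 * exp (- (3/4) * pi * \<alpha>\<^sup>2)"
    using Ecal_r_tail[OF s] by blast
  have nonneg: "norm (Ecal_r r \<alpha> - Ecal_r s \<alpha>) \<le> (C1 + C2) * exp (- (3/4) * pi * \<alpha>\<^sup>2)"
    if "\<alpha> \<ge> 0" for \<alpha>
  proof -
    have "norm (Ecal_r r \<alpha> - Ecal_r s \<alpha>) \<le> norm (Ecal_r r \<alpha> - 1/2) + norm (Ecal_r s \<alpha> - 1/2)"
      using norm_triangle_ineq4[of "Ecal_r r \<alpha> - 1/2" "Ecal_r s \<alpha> - 1/2"] by simp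
    then show ?thesis
      using C1[OF that] C2[OF that] by (simp add: distrib_right)
  qed
  show ?thesis
  proof (rule that)
    fix \<alpha> :: real
    show "norm (Ecal_r r \<alpha> - Ecal_r s \<alpha>) \<le> (C1 + C2) * exp (- (3/4) * pi * \<alpha>\<^sup>2)"
    proof (cases "\<alpha> \<ge> 0")
      case False
      then have "norm (Ecal_r r (- \<alpha>) - Ecal_r s (- \<alpha>)) \<le> (C1 + C2) * exp (- (3/4) * pi * (- \<alpha>)\<^sup>2)"
        by (intro nonneg) simp
      then show ?thesis by (simp add: Ecal_r_minus norm_minus_commute)
    qed (rule nonneg)
  qed
qed

section \<open>Lorentzian quadratic forms\<close>

lemma qform_eq_inner: "qform M c = c \<bullet> (M *v c)"
  unfolding qform_def inner_vec_def matrix_vector_mult_def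
  by (simp add: sum_distrib_left mult_ac)

lemma inner_matrix_transpose: "((A::real^'n^'m) *v u) \<bullet> v = u \<bullet> (transpose A *v v)"
  by (metis dot_lmul_matrix transpose_matrix_vector transpose_transpose)

lemma inner_symmetric_matrix_commute:
  "transpose M = M \<Longrightarrow> (a::real^'n) \<bullet> (M *v b) = b \<bullet> (M *v a)"
  by (metis inner_commute inner_matrix_transpose)

lemma inner_diagonal_matrix:
  fixes d x y :: "real^'g"
  shows "x \<bullet> ((\<chi> i j. if i = j then d $ i else 0) *v y) = (\<Sum>i\<in>UNIV. d $ i * x $ i * y $ i)"
proof -
  have "(\<Sum>j\<in>UNIV. (if i = j then d $ i else 0) * y $ j) = d $ i * y $ i" for i
    by (simp add: if_distrib [of "\<lambda>t. t * _"] cong: if_cong)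
  then show ?thesis unfolding inner_vec_def matrix_vector_mult_def by (simp add: mult_ac)
qed

lemma has_signature_Lorentzian_diagonal:
  fixes M :: "real^'g^'g"
  assumes "has_signature M (CARD('g) - 1) 1"
  obtains Q d i0 where "orthogonal_matrix Q" "transpose Q ** M ** Q = (\<chi> i j. if i = j then d $ i else 0)"
    "d $ i0 < 0" "\<And>i. i \<noteq> i0 \<Longrightarrow> d $ i > 0"
proof -
  obtain Q d where Q: "orthogonal_matrix Q" "transpose Q ** M ** Q = (\<chi> i j. if i = j then d $ i else 0)"
    and pos: "card {i. d $ i > 0} = CARD('g) - 1" and neg: "card {i. d $ i < 0} = 1"
    using assms unfolding has_signature_def by blast
  obtain i0 where i0: "{i. d $ i < 0} = {i0}" using neg by (rule card_1_singletonE)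
  have "{i. d $ i > 0} \<union> {i. d $ i < 0} = UNIV"
  proof (rule card_subset_eq)
    have "card ({i. d $ i > 0} \<union> {i. d $ i < 0}) = card {i. d $ i > 0} + card {i. d $ i < 0}"
      by (rule card_Un_disjoint) auto
    then show "card ({i. d $ i > 0} \<union> {i. d $ i < 0}) = card (UNIV :: 'g set)"
      using pos neg by (simp add: Suc_leI)
  qed auto
  then have "d $ i > 0" if "i \<noteq> i0" for i
    using i0 that by blast
  with Q i0 show ?thesis by (intro that) auto
qed

lemma weighted_Cauchy_Schwarz:
  fixes d a b :: "'i \<Rightarrow> real"
  assumes "\<And>i. i \<in> S \<Longrightarrow> d i \<ge> 0"
  shows "(\<Sum>i\<in>S. d i * a i * b i)\<^sup>2 \<le> (\<Sum>i\<in>S. d i * (a i)\<^sup>2) * (\<Sum>i\<in>S. d i * (b i)\<^sup>2)"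
proof -
  have "(\<Sum>i\<in>S. (sqrt (d i) * a i) * (sqrt (d i) * b i))\<^sup>2
      \<le> (\<Sum>i\<in>S. (sqrt (d i) * a i)\<^sup>2) * (\<Sum>i\<in>S. (sqrt (d i) * b i)\<^sup>2)"
    by (rule Cauchy_Schwarz_ineq_sum)
  moreover have "sqrt (d i) * sqrt (d i) = d i" if "i \<in> S" for i
    using assms[OF that] by simp
  ultimately show ?thesis
    by (simp add: power2_eq_square mult_ac)
qed

text \<open>With \<open>e = - d $ i0\<close> and \<open>\<Sum>'\<close> the sum over the positive coordinates, orthogonality reads
  \<open>\<Sum>' d w y = e w\<^sub>i\<^sub>0 y\<^sub>i\<^sub>0\<close>; if \<open>y\<close> were not spacelike, Cauchy-Schwarz would give
  \<open>(\<Sum>' d w y)\<^sup>2 < e\<^sup>2 w\<^sub>i\<^sub>0\<^sup>2 y\<^sub>i\<^sub>0\<^sup>2\<close>.\<close>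
lemma Lorentzian_diagonal_orthogonal_pos:
  fixes d w y :: "real^'g"
  assumes neg: "d $ i0 < 0" and pos: "\<And>i. i \<noteq> i0 \<Longrightarrow> d $ i > 0"
    and timelike: "(\<Sum>i\<in>UNIV. d $ i * (w $ i)\<^sup>2) < 0"
    and orthogonal: "(\<Sum>i\<in>UNIV. d $ i * w $ i * y $ i) = 0"
    and "y \<noteq> 0"
  shows "(\<Sum>i\<in>UNIV. d $ i * (y $ i)\<^sup>2) > 0"
proof -
  define S where "S = UNIV - {i0}"
  define e where "e = - d $ i0"
  have e: "e > 0" using neg by (simp add: e_def)
  have split: "(\<Sum>i\<in>UNIV. f i) = f i0 + (\<Sum>i\<in>S. f i)" for f :: "'g \<Rightarrow> real"
    unfolding S_def by (simp add: sum.remove)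
  define Wp where "Wp = (\<Sum>i\<in>S. d $ i * (w $ i)\<^sup>2)"
  define Yp where "Yp = (\<Sum>i\<in>S. d $ i * (y $ i)\<^sup>2)"
  define Xp where "Xp = (\<Sum>i\<in>S. d $ i * w $ i * y $ i)"
  have Wp: "0 \<le> Wp" "Wp < e * (w $ i0)\<^sup>2"
    using timelike pos unfolding split[of "\<lambda>i. d $ i * (w $ i)\<^sup>2"] Wp_def e_def
    by (auto simp: S_def less_imp_le intro!: sum_nonneg mult_nonneg_nonneg)
  have Xp: "Xp = e * w $ i0 * y $ i0"
    using orthogonal unfolding split[of "\<lambda>i. d $ i * w $ i * y $ i"] Xp_def e_def by simp
  have Cauchy_Schwarz: "Xp\<^sup>2 \<le> Wp * Yp"
    unfolding Xp_def Wp_def Yp_def using pos by (intro weighted_Cauchy_Schwarz) (auto simp: S_def less_imp_le)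
  have y_norm: "(\<Sum>i\<in>UNIV. d $ i * (y $ i)\<^sup>2) = Yp - e * (y $ i0)\<^sup>2"
    unfolding split[of "\<lambda>i. d $ i * (y $ i)\<^sup>2"] Yp_def e_def by simp
  show ?thesis
  proof (cases "y $ i0 = 0")
    case True
    obtain j where j: "y $ j \<noteq> 0" using \<open>y \<noteq> 0\<close> by (metis vec_eq_iff zero_index)
    with True have "j \<in> S" by (auto simp: S_def)
    have "0 < d $ j * (y $ j)\<^sup>2" using pos[of j] j \<open>j \<in> S\<close> by (simp add: S_def)
    then have "Yp > 0" unfolding Yp_def
      by (intro sum_pos2[OF _ \<open>j \<in> S\<close>]) (use pos in \<open>auto simp: S_def less_imp_le\<close>)
    then show ?thesis using y_norm True by simp
  next
    case False
    show ?thesis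
    proof (rule ccontr)
      assume "\<not> ?thesis"
      then have "Yp \<le> e * (y $ i0)\<^sup>2" using y_norm by simp
      then have "Xp\<^sup>2 \<le> Wp * (e * (y $ i0)\<^sup>2)"
        using Cauchy_Schwarz Wp(1) by (meson mult_left_mono order_trans)
      also have "\<dots> < (e * (w $ i0)\<^sup>2) * (e * (y $ i0)\<^sup>2)"
        using Wp(2) e False by (intro mult_strict_right_mono) auto
      also have "\<dots> = Xp\<^sup>2" using Xp by (simp add: power_mult_distrib power2_eq_square)
      finally show False by simp
    qed
  qed
qed

lemma Lorentzian_orthogonal_pos:
  fixes M :: "real^'g^'g"
  assumes sig: "has_signature M (CARD('g) - 1) 1"
    and c: "c \<bullet> (M *v c) < 0" and cv: "c \<bullet> (M *v v) = 0" and "v \<noteq> 0"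
  shows "v \<bullet> (M *v v) > 0"
proof -
  obtain Q d i0 where Q: "orthogonal_matrix Q"
    and diag: "transpose Q ** M ** Q = (\<chi> i j. if i = j then d $ i else 0)"
    and neg: "d $ i0 < 0" and pos: "\<And>i. i \<noteq> i0 \<Longrightarrow> d $ i > 0"
    using has_signature_Lorentzian_diagonal[OF sig] by blast
  have QQ: "Q ** transpose Q = mat 1" using Q unfolding orthogonal_matrix_def by auto
  have form: "a \<bullet> (M *v b) = (\<Sum>i\<in>UNIV. d $ i * (transpose Q *v a) $ i * (transpose Q *v b) $ i)" for a b
  proof -
    have "Q ** (transpose Q ** M ** Q) ** transpose Q = (Q ** transpose Q) ** M ** (Q ** transpose Q)"
      by (simp only: matrix_mul_assoc)
    then have "M = Q ** (transpose Q ** M ** Q) ** transpose Q"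
      by (simp add: QQ)
    then have "a \<bullet> (M *v b) = a \<bullet> (Q *v ((transpose Q ** M ** Q) *v (transpose Q *v b)))"
      by (metis matrix_vector_mul_assoc)
    then have "a \<bullet> (M *v b) = (transpose Q *v a) \<bullet> ((transpose Q ** M ** Q) *v (transpose Q *v b))"
      by (simp add: inner_matrix_transpose del: transpose_matrix_vector)
    then show ?thesis unfolding diag inner_diagonal_matrix .
  qed
  have v: "transpose Q *v v \<noteq> 0"
    using \<open>v \<noteq> 0\<close> by (metis QQ matrix_vector_mul_assoc matrix_vector_mul_lid matrix_vector_mult_0_right)
  have "(\<Sum>i\<in>UNIV. d $ i * ((transpose Q *v v) $ i)\<^sup>2) > 0"
  proof (rule Lorentzian_diagonal_orthogonal_pos[OF neg pos _ _ v])
    show "(\<Sum>i\<in>UNIV. d $ i * ((transpose Q *v c) $ i)\<^sup>2) < 0"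
      using c form[of c c] by (simp add: power2_eq_square mult_ac)
    show "(\<Sum>i\<in>UNIV. d $ i * (transpose Q *v c) $ i * (transpose Q *v v) $ i) = 0"
      using cv form[of c v] by simp
  qed
  then show ?thesis using form[of v v] by (simp add: power2_eq_square mult_ac)
qed

text \<open>Writing \<open>x = x' + t c\<close> with \<open>x'\<close> form-orthogonal to \<open>c\<close>, the form equals
  \<open>x' \<bullet> (M *v x') + (\<kappa> - 1) (c \<bullet> (M *v x))\<^sup>2 / (- c \<bullet> (M *v c))\<close>.\<close>
lemma Lorentzian_majorant_pos:
  fixes M :: "real^'g^'g"
  assumes sig: "has_signature M (CARD('g) - 1) 1" and c: "c \<bullet> (M *v c) < 0"
    and \<kappa>: "\<kappa> > 1" and "x \<noteq> 0"
  shows "x \<bullet> (M *v x) + \<kappa> * (c \<bullet> (M *v x))\<^sup>2 / (- (c \<bullet> (M *v c))) > 0"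
proof -
  have sym: "transpose M = M" using sig by (simp add: has_signature_def)
  define q where "q = c \<bullet> (M *v c)"
  define B where "B = c \<bullet> (M *v x)"
  define x' where "x' = x - (B / q) *\<^sub>R c"
  have q: "q < 0" using c by (simp add: q_def)
  have xc: "x \<bullet> (M *v c) = B" unfolding B_def by (rule inner_symmetric_matrix_commute[OF sym])
  have orth: "c \<bullet> (M *v x') = 0"
    using q by (simp add: x'_def B_def [symmetric] q_def [symmetric] matrix_vector_mult_diff_distrib
        matrix_vector_mult_scaleR inner_diff_right)
  have "x' \<bullet> (M *v x') = x \<bullet> (M *v x) - B\<^sup>2 / q"
    using q by (simp add: x'_def matrix_vector_mult_diff_distrib matrix_vector_mult_scaleR inner_diff_right
        inner_diff_left xc B_def [symmetric] q_def [symmetric] power2_eq_square field_simps)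
  then have split: "x \<bullet> (M *v x) + \<kappa> * B\<^sup>2 / (- q) = x' \<bullet> (M *v x') + (\<kappa> - 1) * B\<^sup>2 / (- q)"
    using q by (simp add: field_simps)
  have rest: "(\<kappa> - 1) * B\<^sup>2 / (- q) \<ge> 0"
    using q \<kappa> by (intro divide_nonneg_pos mult_nonneg_nonneg) auto
  show ?thesis
  proof (cases "x' = 0")
    case True
    then have "x = (B / q) *\<^sub>R c" by (simp add: x'_def)
    with \<open>x \<noteq> 0\<close> q have "B \<noteq> 0" by auto
    then have "(\<kappa> - 1) * B\<^sup>2 / (- q) > 0" using q \<kappa> by (intro divide_pos_pos mult_pos_pos) auto
    then show ?thesis using split True by (simp add: B_def q_def)
  next
    case False
    then have "x' \<bullet> (M *v x') > 0" by (rule Lorentzian_orthogonal_pos[OF sig c orth])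
    then show ?thesis using split rest by (simp add: B_def q_def)
  qed
qed

lemma homogeneous_quadratic_lower_bound:
  fixes F :: "'a::euclidean_space \<Rightarrow> real"
  assumes cont: "continuous_on (sphere 0 1) F"
    and hom: "\<And>a x. F (a *\<^sub>R x) = a\<^sup>2 * F x"
    and pos: "\<And>x. x \<noteq> 0 \<Longrightarrow> F x > 0"
  obtains \<mu> where "\<mu> > 0" "\<And>x. \<mu> * (norm x)\<^sup>2 \<le> F x"
proof -
  obtain v :: 'a where "norm v = 1" using vector_choose_size[of 1] by auto
  then have "sphere (0::'a) 1 \<noteq> {}" by auto
  then obtain x0 where x0: "x0 \<in> sphere 0 1" and min: "\<And>y. y \<in> sphere 0 1 \<Longrightarrow> F x0 \<le> F y"
    using continuous_attains_inf[OF compact_sphere _ cont] by blast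
  show ?thesis
  proof (rule that)
    show "F x0 > 0" using x0 by (intro pos) auto
    fix x :: 'a
    show "F x0 * (norm x)\<^sup>2 \<le> F x"
    proof (cases "x = 0")
      case False
      define u where "u = (1 / norm x) *\<^sub>R x"
      have "x = norm x *\<^sub>R u" using False by (simp add: u_def)
      then have "F x = (norm x)\<^sup>2 * F u" by (metis hom)
      moreover have "F x0 \<le> F u" using False by (intro min) (simp add: u_def)
      ultimately show ?thesis by (metis mult.commute mult_right_mono zero_le_power2)
    qed (use hom[of 0] in simp)
  qed
qed

lemma Lorentzian_majorant_lower_bound:
  fixes M :: "real^'g^'g"
  assumes sig: "has_signature M (CARD('g) - 1) 1" and c: "c \<bullet> (M *v c) < 0" and \<kappa>: "\<kappa> > 1"
  obtains \<mu> where "\<mu> > 0"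
    "\<And>x. \<mu> * (norm x)\<^sup>2 \<le> x \<bullet> (M *v x) + \<kappa> * (c \<bullet> (M *v x))\<^sup>2 / (- (c \<bullet> (M *v c)))"
proof -
  define q where "q = c \<bullet> (M *v c)"
  define F where "F x = x \<bullet> (M *v x) + \<kappa> * (c \<bullet> (M *v x))\<^sup>2 / (- q)" for x
  have cont: "continuous_on (sphere 0 1) F"
    unfolding F_def using c by (intro continuous_intros linear_continuous_on) (auto simp: q_def)
  have hom: "F (a *\<^sub>R x) = a\<^sup>2 * F x" for a x
    by (simp add: F_def matrix_vector_mult_scaleR power2_eq_square field_simps)
  have pos: "F x > 0" if "x \<noteq> 0" for x
    using Lorentzian_majorant_pos[OF sig c \<kappa> that] by (simp add: F_def q_def)
  obtain \<mu> where "\<mu> > 0" "\<And>x. \<mu> * (norm x)\<^sup>2 \<le> F x"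
    using homogeneous_quadratic_lower_bound[OF cont hom pos] by blast
  then show ?thesis unfolding F_def q_def by (rule that)
qed

section \<open>Gaussian lattice sums\<close>

lemma summable_on_gaussian_nat:
  fixes l :: real assumes l: "l > 0"
  shows "(\<lambda>n::nat. exp (- l * (real n)\<^sup>2)) summable_on UNIV"
proof -
  have "summable (\<lambda>n::nat. exp (- l * (real n)\<^sup>2))"
  proof (rule summable_comparison_test[OF _ summable_geometric[of "exp (- l)"]])
    show "\<exists>N. \<forall>n\<ge>N. norm (exp (- l * (real n)\<^sup>2)) \<le> exp (- l) ^ n"
    proof (intro exI allI impI)
      fix n :: nat
      have "real n \<le> (real n)\<^sup>2" by (cases n) (auto simp: power2_eq_square)
      then have "- l * (real n)\<^sup>2 \<le> - l * real n" using l by (intro mult_left_mono_neg) auto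
      then show "norm (exp (- l * (real n)\<^sup>2)) \<le> exp (- l) ^ n"
        by (simp add: exp_of_nat_mult [symmetric] mult.commute)
    qed
    show "norm (exp (- l)) < 1" using l by simp
  qed
  then show ?thesis by (subst summable_on_UNIV_nonneg_real_iff) auto
qed

lemma summable_on_gaussian_int:
  fixes l :: real assumes l: "l > 0"
  shows "(\<lambda>k::int. exp (- l * (real_of_int k)\<^sup>2)) summable_on UNIV"
proof -
  let ?f = "\<lambda>k::int. exp (- l * (real_of_int k)\<^sup>2)"
  have "?f summable_on range int" and "?f summable_on range (\<lambda>n. - int n)"
    using summable_on_gaussian_nat[OF l] by (subst summable_on_reindex; simp add: o_def inj_def)+
  moreover have "UNIV = range int \<union> range (\<lambda>n. - int n)"
    by (auto simp: image_def) (metis add.inverse_inverse nonneg_int_cases int_cases)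
  ultimately show ?thesis using summable_on_union by metis
qed

lemma summable_on_gaussian_lattice:
  fixes l :: real assumes l: "l > 0"
  shows "(\<lambda>n::int^'g. exp (- l * (\<Sum>i\<in>UNIV. (real_of_int (n $ i))\<^sup>2))) summable_on UNIV"
proof -
  let ?f = "\<lambda>k::int. exp (- l * (real_of_int k)\<^sup>2)"
  have "Infinite_Set_Sum.abs_summable_on (\<lambda>g. \<Prod>i\<in>UNIV. ?f (g i)) (PiE (UNIV :: 'g set) (\<lambda>_. UNIV))"
    using summable_on_gaussian_int[OF l]
    by (intro abs_summable_on_prod_PiE) (simp_all add: abs_summable_equivalent [symmetric])
  then have prod: "(\<lambda>g. \<Prod>i\<in>UNIV. ?f (g i)) summable_on (UNIV :: ('g \<Rightarrow> int) set)"
    by (simp add: abs_summable_equivalent [symmetric] prod_nonneg PiE_UNIV_domain)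
  have "bij_betw vec_nth (UNIV :: (int^'g) set) UNIV"
    by (auto simp: bij_betw_def inj_def vec_eq_iff image_def intro!: exI[of _ "vec_lambda _"])
  from summable_on_reindex_bij_betw[OF this, of "\<lambda>g. \<Prod>i\<in>UNIV. ?f (g i)"] prod
  have "(\<lambda>n::int^'g. \<Prod>i\<in>UNIV. ?f (n $ i)) summable_on UNIV"
    by simp
  then show ?thesis by (simp add: exp_sum sum_distrib_left)
qed

section \<open>The theta series\<close>

definition of_int_vec :: "int^'n \<Rightarrow> 'a::ring_1^'n" where
  "of_int_vec n = (\<chi> i. of_int (n $ i))"

definition Im_vec :: "complex^'n \<Rightarrow> real^'n" where
  "Im_vec z = (\<chi> i. Im (z $ i))"

definition theta_arg :: "complex^'g^'g \<Rightarrow> complex^'g \<Rightarrow> real^'g \<Rightarrow> int^'g \<Rightarrow> real" where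
  "theta_arg \<Omega> z c n =
     (\<Sum>i\<in>UNIV. c $ i * Im ((\<Omega> *v of_int_vec n + z) $ i)) / sqrt (- (1/2) * qform (ImMat \<Omega>) c)"

definition theta_phase :: "complex^'g^'g \<Rightarrow> complex^'g \<Rightarrow> int^'g \<Rightarrow> complex" where
  "theta_phase \<Omega> z n = (1/2) * (\<Sum>i\<in>UNIV. \<Sum>j\<in>UNIV. of_int (n $ i) * \<Omega> $ i $ j * of_int (n $ j))
     + (\<Sum>i\<in>UNIV. of_int (n $ i) * z $ i)"

lemma Theta_r_eq_infsum:
  "Theta_r r c1 c2 z \<Omega> =
     (\<Sum>\<^sub>\<infinity>n. (Ecal_r r (theta_arg \<Omega> z c2 n) - Ecal_r r (theta_arg \<Omega> z c1 n)) * e (theta_phase \<Omega> z n))"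
proof -
  let ?f = "\<lambda>u. complex_of_real \<bar>u\<bar> powr r"
  have "Theta_r r c1 c2 z \<Omega> = (\<Sum>\<^sub>\<infinity>n. of_real pi powr ((r + 1) / 2) / Gamma ((r + 1) / 2) *
      ((Ecal ?f (theta_arg \<Omega> z c2 n) - Ecal ?f (theta_arg \<Omega> z c1 n)) * e (theta_phase \<Omega> z n)))"
    unfolding Theta_r_def Theta_f_def theta_arg_def theta_phase_def of_int_vec_def Let_def
    by (rule infsum_cmult_right' [symmetric])
  also have "\<dots> = (\<Sum>\<^sub>\<infinity>n. (Ecal_r r (theta_arg \<Omega> z c2 n) - Ecal_r r (theta_arg \<Omega> z c1 n)) * e (theta_phase \<Omega> z n))"
    by (intro infsum_cong) (simp add: Ecal_r_def algebra_simps)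
  finally show ?thesis .
qed

lemma theta_arg_eq:
  "theta_arg \<Omega> z c n =
     (c \<bullet> (ImMat \<Omega> *v of_int_vec n) + c \<bullet> Im_vec z) / sqrt (- (1/2) * (c \<bullet> (ImMat \<Omega> *v c)))"
  by (simp add: theta_arg_def qform_eq_inner matrix_vector_mult_def inner_vec_def ImMat_def of_int_vec_def
      Im_vec_def Im_sum sum_distrib_left distrib_left sum.distrib mult_ac)

lemma Im_theta_phase:
  "Im (theta_phase \<Omega> z n) =
     (1/2) * (of_int_vec n \<bullet> (ImMat \<Omega> *v of_int_vec n)) + of_int_vec n \<bullet> Im_vec z"
  by (simp add: theta_phase_def matrix_vector_mult_def inner_vec_def ImMat_def of_int_vec_def Im_vec_def
      Im_sum sum_distrib_left mult_ac)

lemma norm_e: "norm (e x) = exp (- 2 * pi * Im x)"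
  by (simp add: e_def norm_exp_eq_Re)

lemma norm_of_int_vec_squared:
  "(norm (of_int_vec n :: real^'n))\<^sup>2 = (\<Sum>i\<in>UNIV. (real_of_int (n $ i))\<^sup>2)"
  unfolding power2_norm_eq_inner by (simp add: inner_vec_def of_int_vec_def power2_eq_square)

text \<open>The Gaussian decay \<open>exp (- 3 pi \<alpha>\<^sup>2 / 4)\<close> in the direction of \<open>c\<close> more than compensates
  the negative direction of the indefinite form: \<open>3/4 \<alpha>\<^sup>2\<close> contributes
  \<open>(3/2) (c \<bullet> (M *v x))\<^sup>2 / (- c \<bullet> (M *v c))\<close>, and any factor above \<open>1\<close> makes the form definite.\<close>
lemma Lorentzian_gaussian_exponent_bound:
  fixes M :: "real^'g^'g"
  assumes sig: "has_signature M (CARD('g) - 1) 1" and c: "c \<bullet> (M *v c) < 0"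
  obtains \<mu> K where "\<mu> > 0" "\<And>x. \<mu> * (norm x)\<^sup>2 - K
      \<le> (3/2) * (c \<bullet> (M *v x) + \<beta>)\<^sup>2 / (- (c \<bullet> (M *v c))) + x \<bullet> (M *v x) + 2 * (x \<bullet> y)"
proof -
  define q where "q = c \<bullet> (M *v c)"
  have q: "q < 0" using c by (simp add: q_def)
  obtain \<mu> where \<mu>: "\<mu> > 0"
    and majorant: "\<And>x. \<mu> * (norm x)\<^sup>2 \<le> x \<bullet> (M *v x) + (5/4) * (c \<bullet> (M *v x))\<^sup>2 / (- q)"
    using Lorentzian_majorant_lower_bound[OF sig c, of "5/4"] unfolding q_def by auto
  define K where "K = (15/2) * \<beta>\<^sup>2 / (- q) + 2 * (norm y)\<^sup>2 / \<mu>"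
  show ?thesis
  proof (rule that[of "\<mu> / 2" K])
    fix x :: "real^'g"
    define B where "B = c \<bullet> (M *v x)"
    have "(B + \<beta>)\<^sup>2 - ((5/6) * B\<^sup>2 - 5 * \<beta>\<^sup>2) = (B / sqrt 6 + sqrt 6 * \<beta>)\<^sup>2"
      by (simp add: power2_eq_square field_simps)
    then have "(B + \<beta>)\<^sup>2 \<ge> (5/6) * B\<^sup>2 - 5 * \<beta>\<^sup>2"
      by (metis diff_ge_0_iff_ge zero_le_power2)
    then have "(3/2) * (B + \<beta>)\<^sup>2 / (- q) \<ge> (3/2) * ((5/6) * B\<^sup>2 - 5 * \<beta>\<^sup>2) / (- q)"
      using q by (intro divide_right_mono mult_left_mono) auto
    also have "(3/2) * ((5/6) * B\<^sup>2 - 5 * \<beta>\<^sup>2) / (- q) = (5/4) * B\<^sup>2 / (- q) - (15/2) * \<beta>\<^sup>2 / (- q)"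
      by (simp add: diff_divide_distrib right_diff_distrib)
    finally have timelike: "(3/2) * (B + \<beta>)\<^sup>2 / (- q) \<ge> (5/4) * B\<^sup>2 / (- q) - (15/2) * \<beta>\<^sup>2 / (- q)" .
    have "0 \<le> (sqrt (\<mu> / 2) * norm x - sqrt (2 / \<mu>) * norm y)\<^sup>2" by simp
    also have "\<dots> = (\<mu> / 2) * (norm x)\<^sup>2 + (2 / \<mu>) * (norm y)\<^sup>2 - 2 * (norm x * norm y)"
      using \<mu> by (simp add: power2_eq_square algebra_simps real_sqrt_mult [symmetric])
    finally have "2 * (x \<bullet> y) \<ge> - (\<mu> / 2) * (norm x)\<^sup>2 - 2 * (norm y)\<^sup>2 / \<mu>"
      using Cauchy_Schwarz_ineq2[of x y] by (simp add: abs_le_iff)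
    then show "\<mu> / 2 * (norm x)\<^sup>2 - K
        \<le> (3/2) * (c \<bullet> (M *v x) + \<beta>)\<^sup>2 / (- (c \<bullet> (M *v c))) + x \<bullet> (M *v x) + 2 * (x \<bullet> y)"
      using timelike majorant[of x] by (simp add: K_def B_def q_def)
  qed (use \<mu> in simp)
qed

lemma theta_exponent_eq:
  fixes \<Omega> :: "complex^'g^'g" and n :: "int^'g"
  assumes "qform (ImMat \<Omega>) c < 0"
  defines "M \<equiv> ImMat \<Omega>" and "x \<equiv> of_int_vec n :: real^'g"
  shows "(3/4) * (theta_arg \<Omega> z c n)\<^sup>2 + 2 * Im (theta_phase \<Omega> z n)
    = (3/2) * (c \<bullet> (M *v x) + c \<bullet> Im_vec z)\<^sup>2 / (- (c \<bullet> (M *v c))) + x \<bullet> (M *v x) + 2 * (x \<bullet> Im_vec z)"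
  using assms by (simp add: theta_arg_eq Im_theta_phase qform_eq_inner power_divide real_sqrt_pow2)

lemma norm_mult_e_le:
  assumes "norm (G \<alpha>) \<le> C * exp (- (3/4) * pi * \<alpha>\<^sup>2)"
  shows "norm (G \<alpha> * e w) \<le> C * exp (- pi * ((3/4) * \<alpha>\<^sup>2 + 2 * Im w))"
  unfolding norm_mult norm_e
  using mult_right_mono[OF assms, of "exp (- 2 * pi * Im w)"]
  by (simp add: mult.assoc algebra_simps flip: exp_add)

lemma theta_terms_summable:
  fixes \<Omega> :: "complex^'g^'g" and G :: "real \<Rightarrow> complex"
  assumes sig: "has_signature (ImMat \<Omega>) (CARD('g) - 1) 1" and c: "qform (ImMat \<Omega>) c < 0"
    and G: "\<And>\<alpha>. norm (G \<alpha>) \<le> C * exp (- (3/4) * pi * \<alpha>\<^sup>2)"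
  shows "(\<lambda>n. G (theta_arg \<Omega> z c n) * e (theta_phase \<Omega> z n)) summable_on UNIV"
proof -
  define M where "M = ImMat \<Omega>"
  have c': "c \<bullet> (M *v c) < 0" using c by (simp add: M_def qform_eq_inner)
  obtain \<mu> K where \<mu>: "\<mu> > 0" and exponent: "\<And>x. \<mu> * (norm x)\<^sup>2 - K
      \<le> (3/2) * (c \<bullet> (M *v x) + c \<bullet> Im_vec z)\<^sup>2 / (- (c \<bullet> (M *v c))) + x \<bullet> (M *v x) + 2 * (x \<bullet> Im_vec z)"
    using Lorentzian_gaussian_exponent_bound[OF sig[folded M_def] c'] by blast
  have C: "C \<ge> 0" using G[of 0] by simp (meson norm_ge_zero order_trans)
  have bound: "norm (G (theta_arg \<Omega> z c n) * e (theta_phase \<Omega> z n))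
      \<le> C * exp (pi * K) * exp (- (pi * \<mu>) * (\<Sum>i\<in>UNIV. (real_of_int (n $ i))\<^sup>2))" for n
  proof -
    define x :: "real^'g" where "x = of_int_vec n"
    have "\<mu> * (norm x)\<^sup>2 - K \<le> (3/4) * (theta_arg \<Omega> z c n)\<^sup>2 + 2 * Im (theta_phase \<Omega> z n)"
      using exponent[of x] theta_exponent_eq[OF c] by (simp add: x_def M_def)
    from mult_left_mono[OF this, of pi]
    have "- pi * ((3/4) * (theta_arg \<Omega> z c n)\<^sup>2 + 2 * Im (theta_phase \<Omega> z n))
        \<le> pi * K + - (pi * \<mu>) * (\<Sum>i\<in>UNIV. (real_of_int (n $ i))\<^sup>2)"
      by (simp add: x_def norm_of_int_vec_squared algebra_simps)
    then have "exp (- pi * ((3/4) * (theta_arg \<Omega> z c n)\<^sup>2 + 2 * Im (theta_phase \<Omega> z n)))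
        \<le> exp (pi * K) * exp (- (pi * \<mu>) * (\<Sum>i\<in>UNIV. (real_of_int (n $ i))\<^sup>2))"
      unfolding exp_add [symmetric] exp_le_cancel_iff .
    moreover have "norm (G (theta_arg \<Omega> z c n) * e (theta_phase \<Omega> z n))
        \<le> C * exp (- pi * ((3/4) * (theta_arg \<Omega> z c n)\<^sup>2 + 2 * Im (theta_phase \<Omega> z n)))"
      by (rule norm_mult_e_le[OF G])
    ultimately show ?thesis
      using C by (simp add: mult.assoc) (meson mult_left_mono order_trans)
  qed
  have "(\<lambda>n::int^'g. C * exp (pi * K) * exp (- (pi * \<mu>) * (\<Sum>i\<in>UNIV. (real_of_int (n $ i))\<^sup>2)))
      summable_on UNIV"
    using \<mu> by (intro summable_on_cmult_right summable_on_gaussian_lattice) simp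
  then show ?thesis
    by (rule abs_summable_summable[OF Infinite_Sum.abs_summable_on_comparison_test']) (use bound in auto)
qed

lemma of_int_vec_mult: "of_int_vec (P *v n) = (\<chi> i j. of_int (P $ i $ j)) *v of_int_vec n"
  by (simp add: vec_eq_iff of_int_vec_def matrix_vector_mult_def)

lemma P_stable_Im:
  assumes "P_stable P c1 c2 z \<Omega>"
  shows "transpose (int_to_rmat P) ** ImMat \<Omega> ** int_to_rmat P = ImMat \<Omega>"
    and "transpose (int_to_rmat P) *v Im_vec z = Im_vec z"
proof -
  have "ImMat (transpose (int_to_cmat P) ** \<Omega> ** int_to_cmat P)
      = transpose (int_to_rmat P) ** ImMat \<Omega> ** int_to_rmat P"
    by (simp add: vec_eq_iff matrix_matrix_mult_def transpose_def ImMat_def int_to_cmat_def int_to_rmat_def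
        Im_sum sum_distrib_left sum_distrib_right mult_ac)
  then show "transpose (int_to_rmat P) ** ImMat \<Omega> ** int_to_rmat P = ImMat \<Omega>"
    using assms by (simp add: P_stable_def)
  have "Im ((transpose (int_to_cmat P) *v z) $ i) = Im (z $ i)" for i
  proof -
    obtain k where "(transpose (int_to_cmat P) *v z - z) $ i = of_int k"
      using assms by (auto simp: P_stable_def elim!: Ints_cases)
    then have "(transpose (int_to_cmat P) *v z) $ i = z $ i + of_int k"
      by (simp add: algebra_simps del: transpose_matrix_vector)
    then show ?thesis by simp
  qed
  then show "transpose (int_to_rmat P) *v Im_vec z = Im_vec z"
    by (simp add: vec_eq_iff matrix_vector_mult_def transpose_def int_to_cmat_def int_to_rmat_def Im_vec_def Im_sum)
qed

lemma theta_arg_P_stable: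
  assumes st: "P_stable P c1 c2 z \<Omega>"
  shows "theta_arg \<Omega> z c2 (P *v n) = theta_arg \<Omega> z c1 n"
proof -
  define R where "R = int_to_rmat P"
  have c2: "c2 = R *v c1" using st by (simp add: P_stable_def R_def)
  have form: "(R *v a) \<bullet> (ImMat \<Omega> *v (R *v b)) = a \<bullet> (ImMat \<Omega> *v b)" for a b
    using P_stable_Im(1)[OF st]
    by (simp add: inner_matrix_transpose matrix_vector_mul_assoc matrix_mul_assoc R_def
        del: transpose_matrix_vector)
  have lin: "(R *v a) \<bullet> Im_vec z = a \<bullet> Im_vec z" for a
    using P_stable_Im(2)[OF st] by (simp add: inner_matrix_transpose R_def del: transpose_matrix_vector)
  have "of_int_vec (P *v n) = R *v of_int_vec n"
    by (simp add: of_int_vec_mult R_def int_to_rmat_def)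
  then show ?thesis by (simp add: theta_arg_eq c2 form lin)
qed

definition scalar_prod :: "'a::comm_semiring_1^'n \<Rightarrow> 'a^'n \<Rightarrow> 'a" where
  "scalar_prod u v = (\<Sum>i\<in>UNIV. u $ i * v $ i)"

lemma scalar_prod_matrix_left: "scalar_prod (A *v u) v = scalar_prod u (transpose A *v v)"
  unfolding scalar_prod_def matrix_vector_mult_def transpose_def
  by (simp add: sum_distrib_left sum_distrib_right mult_ac) (rule sum.swap)

lemma theta_phase_eq_scalar_prod:
  "theta_phase \<Omega> z n = (1/2) * scalar_prod (of_int_vec n) (\<Omega> *v of_int_vec n) + scalar_prod (of_int_vec n) z"
  unfolding theta_phase_def scalar_prod_def of_int_vec_def matrix_vector_mult_def
  by (simp add: sum_distrib_left mult_ac)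

lemma e_add_Ints: "m \<in> \<int> \<Longrightarrow> e (x + m) = e x"
  by (auto elim!: Ints_cases simp: e_def algebra_simps exp_add exp_integer_2pi [of "of_int _"])

lemma e_theta_phase_P_stable:
  fixes P :: "int^'g^'g"
  assumes st: "P_stable P c1 c2 z \<Omega>"
  shows "e (theta_phase \<Omega> z (P *v n)) = e (theta_phase \<Omega> z n)"
proof -
  define A where "A = int_to_cmat P"
  define x :: "complex^'g" where "x = of_int_vec n"
  have Px: "of_int_vec (P *v n) = A *v x"
    by (simp add: of_int_vec_mult A_def int_to_cmat_def x_def)
  have quadratic: "scalar_prod (A *v x) (\<Omega> *v (A *v x)) = scalar_prod x (\<Omega> *v x)"
    using st by (simp add: scalar_prod_matrix_left matrix_vector_mul_assoc matrix_mul_assoc P_stable_def A_def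
        del: transpose_matrix_vector)
  have linear: "scalar_prod (A *v x) z = scalar_prod x z + scalar_prod x (transpose A *v z - z)"
    unfolding scalar_prod_matrix_left
    by (simp add: scalar_prod_def right_diff_distrib sum_subtractf del: transpose_matrix_vector)
  have "scalar_prod x (transpose A *v z - z) \<in> \<int>"
    using st unfolding scalar_prod_def x_def of_int_vec_def P_stable_def A_def
    by (auto intro!: Ints_sum Ints_mult simp del: transpose_matrix_vector)
  then show ?thesis
    by (simp add: theta_phase_eq_scalar_prod Px quadratic linear e_add_Ints flip: x_def add.assoc)
qed

lemma det_of_int_matrix: "det (\<chi> i j. of_int (P $ i $ j) :: 'a::comm_ring_1^'n^'n) = of_int (det P)"
  unfolding det_def by simp

lemma of_int_vec_inject: "(of_int_vec a :: 'a::ring_char_0^'n) = of_int_vec b \<longleftrightarrow> a = b"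
  by (simp add: of_int_vec_def vec_eq_iff)

text \<open>Cramer's rule over \<open>\<real>\<close>: since \<open>det P = \<plusminus>1\<close>, the solution of \<open>P n = m\<close> has the
  integral coordinates \<open>det P \<cdot> det (P with column k replaced by m)\<close>.\<close>
lemma unimodular_bij:
  fixes P :: "int^'n^'n"
  assumes det: "det P = 1 \<or> det P = -1"
  shows "bij ((*v) P)"
proof -
  define R :: "real^'n^'n" where "R = (\<chi> i j. of_int (P $ i $ j))"
  have det_R: "det R = of_int (det P)" unfolding R_def by (rule det_of_int_matrix)
  then have R0: "det R \<noteq> 0" using det by auto
  have R: "of_int_vec (P *v n) = R *v of_int_vec n" for n
    unfolding R_def by (rule of_int_vec_mult)
  have "inj ((*v) R)" using R0 by (simp add: inj_matrix_vector_mult invertible_det_nz)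
  then have "inj ((*v) P)"
    by (metis (mono_tags, lifting) R injD injI of_int_vec_inject)
  moreover have "surj ((*v) P)"
  proof (rule surjI)
    fix m :: "int^'n"
    define n where "n = (\<chi> k. det (\<chi> i j. if j = k then m $ i else P $ i $ j) * det P)"
    have "of_int_vec n = (\<chi> k. det (\<chi> i j. if j = k then of_int_vec m $ i else R $ i $ j) / det R)"
    proof -
      have "det (\<chi> i j. if j = k then of_int_vec m $ i else R $ i $ j)
          = of_int (det (\<chi> i j. if j = k then m $ i else P $ i $ j))" for k
      proof -
        have "(\<chi> i j. if j = k then of_int_vec m $ i else R $ i $ j)
            = (\<chi> i j. real_of_int ((\<chi> i j. if j = k then m $ i else P $ i $ j) $ i $ j))"
          by (simp add: vec_eq_iff R_def of_int_vec_def)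
        then show ?thesis by (simp only: det_of_int_matrix)
      qed
      then show ?thesis
        using det by (auto simp: vec_eq_iff of_int_vec_def n_def det_R)
    qed
    then have "R *v of_int_vec n = of_int_vec m"
      using cramer[OF R0, of "of_int_vec n" "of_int_vec m"] by simp
    then have "of_int_vec (P *v n) = (of_int_vec m :: real^'n)"
      by (simp only: R)
    then show "P *v n = m" by (simp add: of_int_vec_inject)
  qed
  ultimately show ?thesis by (simp add: bij_def)
qed

lemma infsum_theta_terms_P_stable:
  fixes P :: "int^'g^'g" and G :: "real \<Rightarrow> complex"
  assumes "det P = 1 \<or> det P = -1" and st: "P_stable P c1 c2 z \<Omega>"
  shows "(\<Sum>\<^sub>\<infinity>n. G (theta_arg \<Omega> z c2 n) * e (theta_phase \<Omega> z n))
       = (\<Sum>\<^sub>\<infinity>n. G (theta_arg \<Omega> z c1 n) * e (theta_phase \<Omega> z n))"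
proof -
  have "(\<Sum>\<^sub>\<infinity>n. G (theta_arg \<Omega> z c2 n) * e (theta_phase \<Omega> z n))
      = (\<Sum>\<^sub>\<infinity>n. G (theta_arg \<Omega> z c2 (P *v n)) * e (theta_phase \<Omega> z (P *v n)))"
    by (rule infsum_reindex_bij_betw [OF unimodular_bij [OF assms(1)], symmetric])
  also have "\<dots> = (\<Sum>\<^sub>\<infinity>n. G (theta_arg \<Omega> z c1 n) * e (theta_phase \<Omega> z n))"
    by (simp only: theta_arg_P_stable [OF st] e_theta_phase_P_stable [OF st])
  finally show ?thesis .
qed

text \<open>No summability of \<open>f\<close> is needed: if \<open>f\<close> is not summable, neither is the left-hand
  family, and both sides are \<open>0\<close> by the convention for \<open>infsum\<close>.\<close>
lemma infsum_add_diff_of_same_sum: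
  fixes f g h :: "'a \<Rightarrow> 'b::{topological_ab_group_add, t2_space}"
  assumes "(g has_sum S) A" and "(h has_sum S) A"
  shows "infsum (\<lambda>x. f x + (g x - h x)) A = infsum f A"
proof -
  have "((\<lambda>x. g x + - h x) has_sum (S + - S)) A"
    using assms by (intro has_sum_add) (simp_all add: has_sum_uminus)
  then have diff: "((\<lambda>x. g x - h x) has_sum 0) A" by simp
  show ?thesis
  proof (cases "f summable_on A")
    case True
    then show ?thesis
      using infsum_add[OF True has_sum_imp_summable[OF diff]] infsumI[OF diff] by simp
  next
    case False
    have "\<not> (\<lambda>x. f x + (g x - h x)) summable_on A"
    proof
      assume "(\<lambda>x. f x + (g x - h x)) summable_on A"
      from summable_on_add[OF this summable_on_uminus[THEN iffD2, OF has_sum_imp_summable[OF diff]]]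
      have "f summable_on A" by simp
      then show False using False by simp
    qed
    then show ?thesis using False by (simp add: infsum_not_exists)
  qed
qed

theorem mainTheorem8:
  fixes P :: "int^'g^'g" and z :: "complex^'g" and \<Omega> :: "complex^'g^'g"
    and c1 c2 :: "real^'g" and r s :: complex
  assumes "det P = 1 \<or> det P = -1"
    and "transpose \<Omega> = \<Omega>"
    and "has_signature (ImMat \<Omega>) (CARD('g) - 1) 1"
    and "qform (ImMat \<Omega>) c1 < 0" and "qform (ImMat \<Omega>) c2 < 0"
    and "P_stable P c1 c2 z \<Omega>"
    and "Re r > -1" and "Re s > -1"
  shows "Theta_r r c1 c2 z \<Omega> = Theta_r s c1 c2 z \<Omega>"
proof -
  define D where "D c n = (Ecal_r r (theta_arg \<Omega> z c n) - Ecal_r s (theta_arg \<Omega> z c n)) * e (theta_phase \<Omega> z n)"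
    for c n
  obtain C where C: "\<And>\<alpha>. norm (Ecal_r r \<alpha> - Ecal_r s \<alpha>) \<le> C * exp (- (3/4) * pi * \<alpha>\<^sup>2)"
    using Ecal_r_diff_bound[OF assms(7,8)] by blast
  have summable: "D c1 summable_on UNIV" "D c2 summable_on UNIV"
    unfolding D_def using theta_terms_summable[OF assms(3) _ C] assms(4,5) by auto
  have "infsum (D c2) UNIV = infsum (D c1) UNIV"
    unfolding D_def by (rule infsum_theta_terms_P_stable [OF assms(1,6)])
  then have same_sum: "(D c2 has_sum infsum (D c1) UNIV) UNIV" "(D c1 has_sum infsum (D c1) UNIV) UNIV"
    using has_sum_infsum [OF summable(2)] has_sum_infsum [OF summable(1)] by simp_all
  have "Theta_r r c1 c2 z \<Omega> = (\<Sum>\<^sub>\<infinity>n.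
      (Ecal_r s (theta_arg \<Omega> z c2 n) - Ecal_r s (theta_arg \<Omega> z c1 n)) * e (theta_phase \<Omega> z n) + (D c2 n - D c1 n))"
    unfolding Theta_r_eq_infsum D_def by (simp add: algebra_simps)
  then show ?thesis
    unfolding infsum_add_diff_of_same_sum [OF same_sum] Theta_r_eq_infsum .
qed

end
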